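(* Let $Q$ be an automorphic loop of nilpotency class $2$. Then $(ab,c,d)=(a,c,d)(b,c,d)$, $(a,bc,d)=(a,b,d)(a,c,d)$, and $(a,b,cd)=(a,b,c)(a,b,d)$ for every $a,b,c,d\in Q$.
   Context: A loop is a set with a binary operation such that all left and right translations $L_a:b\mapsto ab$, $R_a:b\mapsto ba$ are bijections and there is a two-sided identity $1$. The inner mapping group is the stabilizer of $1$ in the group generated by all translations; $Q$ is automorphic if all inner mappings are automorphisms. The associator $(a,b,c)$ is defined by $(ab)c=(a(bc))(a,b,c)$. The center $Z(Q)$ is the set of elements fixed by all inner mappings; $Z_0=1$, $Z_{i+1}(Q)$ is the preimage of $Z(Q/Z_i(Q))$, and $Q$ has nilpotency class $n$ if $Z_{n-1}(Q)\neq Q=Z_n(Q)$. *)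

theory Defs
  imports Main
begin

definition loop :: "'a set \<Rightarrow> ('a \<Rightarrow> 'a \<Rightarrow> 'a) \<Rightarrow> 'a \<Rightarrow> bool" where
  "loop Q m e \<longleftrightarrow> e \<in> Q \<and> (\<forall>x\<in>Q. \<forall>y\<in>Q. m x y \<in> Q)
     \<and> (\<forall>x\<in>Q. m e x = x \<and> m x e = x)
     \<and> (\<forall>a\<in>Q. bij_betw (m a) Q Q \<and> bij_betw (\<lambda>x. m x a) Q Q)"

text \<open>Translations, extended by the identity outside the carrier (so they are permutations of the type).\<close>

definition ltrans :: "'a set \<Rightarrow> ('a \<Rightarrow> 'a \<Rightarrow> 'a) \<Rightarrow> 'a \<Rightarrow> 'a \<Rightarrow> 'a" where
  "ltrans Q m a x = (if x \<in> Q then m a x else x)"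

definition rtrans :: "'a set \<Rightarrow> ('a \<Rightarrow> 'a \<Rightarrow> 'a) \<Rightarrow> 'a \<Rightarrow> 'a \<Rightarrow> 'a" where
  "rtrans Q m a x = (if x \<in> Q then m x a else x)"

inductive_set mlt :: "'a set \<Rightarrow> ('a \<Rightarrow> 'a \<Rightarrow> 'a) \<Rightarrow> ('a \<Rightarrow> 'a) set"
  for Q m where
  mlt_id: "id \<in> mlt Q m"
| mlt_L: "f \<in> mlt Q m \<Longrightarrow> a \<in> Q \<Longrightarrow> ltrans Q m a \<circ> f \<in> mlt Q m"
| mlt_R: "f \<in> mlt Q m \<Longrightarrow> a \<in> Q \<Longrightarrow> rtrans Q m a \<circ> f \<in> mlt Q m"
| mlt_Linv: "f \<in> mlt Q m \<Longrightarrow> a \<in> Q \<Longrightarrow> inv (ltrans Q m a) \<circ> f \<in> mlt Q m"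
| mlt_Rinv: "f \<in> mlt Q m \<Longrightarrow> a \<in> Q \<Longrightarrow> inv (rtrans Q m a) \<circ> f \<in> mlt Q m"

definition inn :: "'a set \<Rightarrow> ('a \<Rightarrow> 'a \<Rightarrow> 'a) \<Rightarrow> 'a \<Rightarrow> ('a \<Rightarrow> 'a) set" where
  "inn Q m e = {f \<in> mlt Q m. f e = e}"

definition automorphic :: "'a set \<Rightarrow> ('a \<Rightarrow> 'a \<Rightarrow> 'a) \<Rightarrow> 'a \<Rightarrow> bool" where
  "automorphic Q m e \<longleftrightarrow> loop Q m e \<and>
     (\<forall>f\<in>inn Q m e. \<forall>x\<in>Q. \<forall>y\<in>Q. f (m x y) = m (f x) (f y))"

definition center :: "'a set \<Rightarrow> ('a \<Rightarrow> 'a \<Rightarrow> 'a) \<Rightarrow> 'a \<Rightarrow> 'a set" where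
  "center Q m e = {x \<in> Q. \<forall>f\<in>inn Q m e. f x = x}"

text \<open>Quotient loop Q/N by a normal subloop N (cosets xN, with (xN)(yN) = (xy)N).\<close>

definition lcoset :: "('a \<Rightarrow> 'a \<Rightarrow> 'a) \<Rightarrow> 'a \<Rightarrow> 'a set \<Rightarrow> 'a set" where
  "lcoset m x N = m x ` N"

definition quot_carrier :: "'a set \<Rightarrow> ('a \<Rightarrow> 'a \<Rightarrow> 'a) \<Rightarrow> 'a set \<Rightarrow> 'a set set" where
  "quot_carrier Q m N = {lcoset m x N | x. x \<in> Q}"

definition quot_mult :: "'a set \<Rightarrow> ('a \<Rightarrow> 'a \<Rightarrow> 'a) \<Rightarrow> 'a set \<Rightarrow> 'a set \<Rightarrow> 'a set \<Rightarrow> 'a set" where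
  "quot_mult Q m N A B = lcoset m (m (SOME a. a \<in> Q \<and> A = lcoset m a N) (SOME b. b \<in> Q \<and> B = lcoset m b N)) N"

fun upper_center :: "'a set \<Rightarrow> ('a \<Rightarrow> 'a \<Rightarrow> 'a) \<Rightarrow> 'a \<Rightarrow> nat \<Rightarrow> 'a set" where
  "upper_center Q m e 0 = {e}"
| "upper_center Q m e (Suc i) =
     {x \<in> Q. lcoset m x (upper_center Q m e i)
        \<in> center (quot_carrier Q m (upper_center Q m e i)) (quot_mult Q m (upper_center Q m e i))
                 (upper_center Q m e i)}"

definition nilpotency_class :: "'a set \<Rightarrow> ('a \<Rightarrow> 'a \<Rightarrow> 'a) \<Rightarrow> 'a \<Rightarrow> nat \<Rightarrow> bool" where
  "nilpotency_class Q m e n \<longleftrightarrow> upper_center Q m e n = Q \<and> upper_center Q m e (n - 1) \<noteq> Q"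

definition ldiv :: "'a set \<Rightarrow> ('a \<Rightarrow> 'a \<Rightarrow> 'a) \<Rightarrow> 'a \<Rightarrow> 'a \<Rightarrow> 'a" where
  "ldiv Q m x y = (THE z. z \<in> Q \<and> m x z = y)"

definition associator :: "'a set \<Rightarrow> ('a \<Rightarrow> 'a \<Rightarrow> 'a) \<Rightarrow> 'a \<Rightarrow> 'a \<Rightarrow> 'a \<Rightarrow> 'a" where
  "associator Q m a b c = ldiv Q m (m a (m b c)) (m (m a b) c)"

end

theory Submission
  imports Defs
begin

text \<open>The center consists of the elements that commute and associate with everything; it is
  a subloop, so the quotient by it is again a loop. Nilpotency class 2 says that every coset of
  the center is central in this quotient, which makes the quotient associative, i.e.\ all
  associators are central. In an automorphic loop the inner mappings
  \<open>L\<^sub>a\<^sub>,\<^sub>b = L\<^sub>a\<^sub>b\<^sup>-\<^sup>1 L\<^sub>a L\<^sub>b\<close> and \<open>R\<^sub>c\<^sub>,\<^sub>d = R\<^sub>c\<^sub>d\<^sup>-\<^sup>1 R\<^sub>d R\<^sub>c\<close> are automorphisms,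
  and once associators are central they satisfy \<open>L\<^sub>a\<^sub>,\<^sub>b(x) (a,b,x) = x\<close> and
  \<open>R\<^sub>c\<^sub>,\<^sub>d(x) = x (x,c,d)\<close>; multiplicativity of these maps is linearity of the
  associator in its third and first argument. Linearity in the middle argument then follows from
  the pentagon identity obtained by bracketing \<open>((ab)c)d\<close> in two ways.\<close>

definition is_central :: "'a set \<Rightarrow> ('a \<Rightarrow> 'a \<Rightarrow> 'a) \<Rightarrow> 'a \<Rightarrow> bool" where
  "is_central Q m u \<longleftrightarrow> u \<in> Q \<and> (\<forall>x\<in>Q. m u x = m x u \<and> (\<forall>y\<in>Q.
     m (m u x) y = m u (m x y) \<and> m (m x u) y = m x (m u y) \<and> m (m x y) u = m x (m y u)))"

definition inner_T :: "'a set \<Rightarrow> ('a \<Rightarrow> 'a \<Rightarrow> 'a) \<Rightarrow> 'a \<Rightarrow> 'a \<Rightarrow> 'a" where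
  "inner_T Q m x = inv (ltrans Q m x) \<circ> rtrans Q m x"

definition inner_L :: "'a set \<Rightarrow> ('a \<Rightarrow> 'a \<Rightarrow> 'a) \<Rightarrow> 'a \<Rightarrow> 'a \<Rightarrow> 'a \<Rightarrow> 'a" where
  "inner_L Q m x y = inv (ltrans Q m (m x y)) \<circ> ltrans Q m x \<circ> ltrans Q m y"

definition inner_R :: "'a set \<Rightarrow> ('a \<Rightarrow> 'a \<Rightarrow> 'a) \<Rightarrow> 'a \<Rightarrow> 'a \<Rightarrow> 'a \<Rightarrow> 'a" where
  "inner_R Q m x y = inv (rtrans Q m (m x y)) \<circ> rtrans Q m y \<circ> rtrans Q m x"

locale loop_struct =
  fixes Q :: "'a set" and m :: "'a \<Rightarrow> 'a \<Rightarrow> 'a" and e :: 'a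
  assumes loop: "loop Q m e"
begin

lemma unit_closed: "e \<in> Q"
  and mult_closed: "x \<in> Q \<Longrightarrow> y \<in> Q \<Longrightarrow> m x y \<in> Q"
  and left_unit: "x \<in> Q \<Longrightarrow> m e x = x"
  and right_unit: "x \<in> Q \<Longrightarrow> m x e = x"
  and bij_left: "x \<in> Q \<Longrightarrow> bij_betw (m x) Q Q"
  and bij_right: "x \<in> Q \<Longrightarrow> bij_betw (\<lambda>y. m y x) Q Q"
  using loop unfolding loop_def by auto

lemma left_cancel: "a \<in> Q \<Longrightarrow> x \<in> Q \<Longrightarrow> y \<in> Q \<Longrightarrow> m a x = m a y \<Longrightarrow> x = y"
  using bij_left unfolding bij_betw_def inj_on_def by blast

lemma right_cancel: "a \<in> Q \<Longrightarrow> x \<in> Q \<Longrightarrow> y \<in> Q \<Longrightarrow> m x a = m y a \<Longrightarrow> x = y"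
  using bij_right unfolding bij_betw_def inj_on_def by blast

lemma left_solvable: "a \<in> Q \<Longrightarrow> y \<in> Q \<Longrightarrow> \<exists>x\<in>Q. m a x = y"
  using bij_left[of a] unfolding bij_betw_def by (metis imageE)

lemma right_solvable: "a \<in> Q \<Longrightarrow> y \<in> Q \<Longrightarrow> \<exists>x\<in>Q. m x a = y"
  using bij_right[of a] unfolding bij_betw_def by (metis (no_types, lifting) imageE)

lemma inj_ltrans: "a \<in> Q \<Longrightarrow> inj (ltrans Q m a)"
  unfolding inj_def ltrans_def by (metis left_cancel mult_closed)

lemma inj_rtrans: "a \<in> Q \<Longrightarrow> inj (rtrans Q m a)"
  unfolding inj_def rtrans_def by (metis right_cancel mult_closed)

lemma inv_ltrans_mult: "a \<in> Q \<Longrightarrow> x \<in> Q \<Longrightarrow> inv (ltrans Q m a) (m a x) = x"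
  using inv_f_f[OF inj_ltrans, of a x] by (simp add: ltrans_def)

lemma inv_rtrans_mult: "a \<in> Q \<Longrightarrow> x \<in> Q \<Longrightarrow> inv (rtrans Q m a) (m x a) = x"
  using inv_f_f[OF inj_rtrans, of a x] by (simp add: rtrans_def)

lemma mlt_closed: "f \<in> mlt Q m \<Longrightarrow> x \<in> Q \<Longrightarrow> f x \<in> Q"
proof (induction arbitrary: x rule: mlt.induct)
  case (mlt_Linv f a)
  then obtain y where "y \<in> Q" "m a y = f x" using left_solvable by blast
  then show ?case using mlt_Linv.hyps(2) inv_ltrans_mult by (metis comp_apply)
next
  case (mlt_Rinv f a)
  then obtain y where "y \<in> Q" "m y a = f x" using right_solvable by blast
  then show ?case using mlt_Rinv.hyps(2) inv_rtrans_mult by (metis comp_apply)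
qed (auto simp: ltrans_def rtrans_def mult_closed)

lemma inner_T_spec:
  assumes "x \<in> Q" "z \<in> Q"
  shows "inner_T Q m x z \<in> Q" "m x (inner_T Q m x z) = m z x"
proof -
  obtain w where w: "w \<in> Q" "m x w = m z x"
    using left_solvable[OF assms(1) mult_closed[OF assms(2,1)]] by blast
  have "inner_T Q m x z = inv (ltrans Q m x) (m x w)"
    using assms w(2) by (simp add: inner_T_def rtrans_def)
  also have "\<dots> = w" using inv_ltrans_mult[OF assms(1) w(1)] .
  finally show "inner_T Q m x z \<in> Q" "m x (inner_T Q m x z) = m z x" using w by auto
qed

lemma inner_L_spec:
  assumes "x \<in> Q" "y \<in> Q" "z \<in> Q"
  shows "inner_L Q m x y z \<in> Q" "m (m x y) (inner_L Q m x y z) = m x (m y z)"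
proof -
  obtain w where w: "w \<in> Q" "m (m x y) w = m x (m y z)"
    using left_solvable[OF mult_closed[OF assms(1,2)]
        mult_closed[OF assms(1) mult_closed[OF assms(2,3)]]] by blast
  have "inner_L Q m x y z = inv (ltrans Q m (m x y)) (m (m x y) w)"
    using assms w(2) by (simp add: inner_L_def ltrans_def mult_closed)
  also have "\<dots> = w" using inv_ltrans_mult[OF mult_closed[OF assms(1,2)] w(1)] .
  finally show "inner_L Q m x y z \<in> Q" "m (m x y) (inner_L Q m x y z) = m x (m y z)"
    using w by auto
qed

lemma inner_R_spec:
  assumes "x \<in> Q" "y \<in> Q" "z \<in> Q"
  shows "inner_R Q m x y z \<in> Q" "m (inner_R Q m x y z) (m x y) = m (m z x) y"
proof -
  obtain w where w: "w \<in> Q" "m w (m x y) = m (m z x) y"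
    using right_solvable[OF mult_closed[OF assms(1,2)]
        mult_closed[OF mult_closed[OF assms(3,1)] assms(2)]] by blast
  have "inner_R Q m x y z = inv (rtrans Q m (m x y)) (m w (m x y))"
    using assms w(2) by (simp add: inner_R_def rtrans_def mult_closed)
  also have "\<dots> = w" using inv_rtrans_mult[OF mult_closed[OF assms(1,2)] w(1)] .
  finally show "inner_R Q m x y z \<in> Q" "m (inner_R Q m x y z) (m x y) = m (m z x) y"
    using w by auto
qed

lemma inner_T_inn:
  assumes x: "x \<in> Q"
  shows "inner_T Q m x \<in> inn Q m e"
proof -
  have "inv (ltrans Q m x) \<circ> (rtrans Q m x \<circ> id) \<in> mlt Q m"
    by (intro mlt_Linv mlt_R mlt_id x)
  moreover have "inner_T Q m x e = e"
    using inner_T_spec[OF x unit_closed] x unit_closed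
    by (metis left_cancel left_unit right_unit)
  ultimately show ?thesis unfolding inn_def inner_T_def by simp
qed

lemma inner_L_inn:
  assumes xy: "x \<in> Q" "y \<in> Q"
  shows "inner_L Q m x y \<in> inn Q m e"
proof -
  have "inv (ltrans Q m (m x y)) \<circ> (ltrans Q m x \<circ> (ltrans Q m y \<circ> id)) \<in> mlt Q m"
    by (intro mlt_Linv mlt_L mlt_id xy mult_closed)
  moreover have "inner_L Q m x y e = e"
    using inner_L_spec[OF xy unit_closed] xy unit_closed
    by (metis left_cancel mult_closed right_unit)
  ultimately show ?thesis unfolding inn_def inner_L_def by (simp add: comp_assoc)
qed

lemma inner_R_inn:
  assumes xy: "x \<in> Q" "y \<in> Q"
  shows "inner_R Q m x y \<in> inn Q m e"
proof -
  have "inv (rtrans Q m (m x y)) \<circ> (rtrans Q m y \<circ> (rtrans Q m x \<circ> id)) \<in> mlt Q m"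
    by (intro mlt_Rinv mlt_R mlt_id xy mult_closed)
  moreover have "inner_R Q m x y e = e"
    using inner_R_spec[OF xy unit_closed] xy unit_closed
    by (metis right_cancel mult_closed left_unit)
  ultimately show ?thesis unfolding inn_def inner_R_def by (simp add: comp_assoc)
qed

lemma central_closed: "is_central Q m u \<Longrightarrow> u \<in> Q"
  unfolding is_central_def by blast

lemma central_commute: "is_central Q m u \<Longrightarrow> x \<in> Q \<Longrightarrow> m u x = m x u"
  unfolding is_central_def by blast

lemma central_assoc:
  assumes "is_central Q m u" "x \<in> Q" "y \<in> Q"
  shows "m (m u x) y = m u (m x y)" "m (m x u) y = m x (m u y)" "m (m x y) u = m x (m y u)"
  using assms unfolding is_central_def by blast+

lemma central_swap:
  assumes "is_central Q m u" "x \<in> Q" "y \<in> Q"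
  shows "m (m x u) y = m (m x y) u"
  using central_assoc[OF assms] central_commute[OF assms(1,3)] by simp

lemma mult_central_factors:
  assumes "x \<in> Q" "y \<in> Q" "is_central Q m u" "is_central Q m v"
  shows "m (m x u) (m y v) = m (m x y) (m v u)"
proof -
  have "m (m x u) (m y v) = m (m x (m y v)) u"
    using central_swap[OF assms(3,1)] assms mult_closed central_closed by simp
  also have "\<dots> = m (m (m x y) v) u" using central_assoc(3)[OF assms(4,1,2)] by simp
  also have "\<dots> = m (m x y) (m v u)"
    by (rule central_assoc(3)) (use assms mult_closed central_closed in auto)
  finally show ?thesis .
qed

lemma central_if_fixed_by_inn:
  assumes u: "u \<in> Q" and fixed: "\<And>f. f \<in> inn Q m e \<Longrightarrow> f u = u"
  shows "is_central Q m u"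
proof -
  have comm: "m u x = m x u" if "x \<in> Q" for x
    using inner_T_spec[OF that u] fixed[OF inner_T_inn[OF that]] by simp
  have left: "m (m u x) y = m u (m x y)" if "x \<in> Q" "y \<in> Q" for x y
    using inner_R_spec[OF that u] fixed[OF inner_R_inn[OF that]] by simp
  have right: "m (m x y) u = m x (m y u)" if "x \<in> Q" "y \<in> Q" for x y
    using inner_L_spec[OF that u] fixed[OF inner_L_inn[OF that]] by simp
  have mid: "m (m x u) y = m x (m u y)" if "x \<in> Q" "y \<in> Q" for x y
  proof -
    have "m (m x u) y = m (m u x) y" using comm[OF that(1)] by simp
    also have "\<dots> = m u (m x y)" using left[OF that] .
    also have "\<dots> = m (m x y) u" using comm[OF mult_closed[OF that]] .
    also have "\<dots> = m x (m y u)" using right[OF that] .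
    finally show ?thesis using comm[OF that(2)] by simp
  qed
  show ?thesis unfolding is_central_def using u by (auto intro!: comm left mid right)
qed

lemma mlt_mult_central:
  assumes u: "is_central Q m u"
  shows "f \<in> mlt Q m \<Longrightarrow> x \<in> Q \<Longrightarrow> f (m x u) = m (f x) u"
proof (induction arbitrary: x rule: mlt.induct)
  case (mlt_L f a)
  have fx: "f x \<in> Q" using mlt_closed mlt_L by blast
  have "ltrans Q m a (f (m x u)) = m a (m (f x) u)"
    using mlt_L fx u central_closed by (simp add: ltrans_def mult_closed)
  also have "\<dots> = m (m a (f x)) u" using central_assoc(3)[OF u mlt_L.hyps(2) fx] ..
  finally show ?case using fx by (simp add: ltrans_def)
next
  case (mlt_R f a)
  have fx: "f x \<in> Q" using mlt_closed mlt_R by blast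
  have "rtrans Q m a (f (m x u)) = m (m (f x) u) a"
    using mlt_R fx u central_closed by (simp add: rtrans_def mult_closed)
  also have "\<dots> = m (m (f x) a) u" using central_swap[OF u fx mlt_R.hyps(2)] .
  finally show ?case using fx by (simp add: rtrans_def)
next
  case (mlt_Linv f a)
  have "f x \<in> Q" using mlt_closed mlt_Linv by blast
  then obtain y where y: "y \<in> Q" "m a y = f x" using left_solvable mlt_Linv.hyps(2) by blast
  have "f (m x u) = m a (m y u)"
    using mlt_Linv.IH[OF mlt_Linv.prems] y central_assoc(3)[OF u mlt_Linv.hyps(2) y(1)] by simp
  then show ?case
    using y(1) y(2)[symmetric] mlt_Linv.hyps(2) u inv_ltrans_mult central_closed mult_closed by simp
next
  case (mlt_Rinv f a)
  have "f x \<in> Q" using mlt_closed mlt_Rinv by blast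
  then obtain y where y: "y \<in> Q" "m y a = f x" using right_solvable mlt_Rinv.hyps(2) by blast
  have "f (m x u) = m (m y u) a"
    using mlt_Rinv.IH[OF mlt_Rinv.prems] y central_swap[OF u y(1) mlt_Rinv.hyps(2)] by simp
  then show ?case
    using y(1) y(2)[symmetric] mlt_Rinv.hyps(2) u inv_rtrans_mult central_closed mult_closed by simp
qed simp

lemma center_iff_central: "u \<in> center Q m e \<longleftrightarrow> is_central Q m u"
proof
  assume "u \<in> center Q m e"
  then show "is_central Q m u" unfolding center_def by (blast intro: central_if_fixed_by_inn)
next
  assume u: "is_central Q m u"
  have "f u = u" if "f \<in> inn Q m e" for f
    using mlt_mult_central[OF u, of f e] that u unit_closed left_unit central_closed
    unfolding inn_def by simp
  then show "u \<in> center Q m e" unfolding center_def using u central_closed by blast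
qed

lemma inn_fixes_central: "is_central Q m u \<Longrightarrow> f \<in> inn Q m e \<Longrightarrow> f u = u"
  using center_iff_central unfolding center_def by blast

lemma central_mult:
  assumes u: "is_central Q m u" and v: "is_central Q m v"
  shows "is_central Q m (m u v)"
proof -
  have "f (m u v) = m u v" if "f \<in> inn Q m e" for f
    using mlt_mult_central[OF v, of f u] inn_fixes_central[OF u that] that u central_closed
    unfolding inn_def by simp
  then show ?thesis
    by (rule central_if_fixed_by_inn[OF mult_closed[OF central_closed[OF u] central_closed[OF v]]])
qed

lemma central_ldiv:
  assumes u: "is_central Q m u" and v: "is_central Q m v"
  obtains w where "is_central Q m w" "m u w = v"
proof -
  obtain w where w: "w \<in> Q" "m u w = v"
    using left_solvable[OF central_closed[OF u] central_closed[OF v]] by blast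
  have "f w = w" if f: "f \<in> inn Q m e" for f
  proof -
    have fw: "f w \<in> Q" using mlt_closed f w(1) unfolding inn_def by blast
    have "m u (f w) = f (m w u)"
      using mlt_mult_central[OF u, of f w] f w(1) central_commute[OF u] fw unfolding inn_def by simp
    also have "\<dots> = m u w"
      using w central_commute[OF u w(1)] inn_fixes_central[OF v f] by simp
    finally show ?thesis by (rule left_cancel[OF central_closed[OF u] fw w(1)])
  qed
  then have "is_central Q m w" by (rule central_if_fixed_by_inn[OF w(1)])
  then show thesis using w(2) by (rule that)
qed

end

lemma bij_betw_induced:
  assumes h: "bij_betw h A A" and g: "\<And>x. x \<in> A \<Longrightarrow> g (p x) = p (h x)"
    and reflect: "\<And>x y. x \<in> A \<Longrightarrow> y \<in> A \<Longrightarrow> p (h x) = p (h y) \<Longrightarrow> p x = p y"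
  shows "bij_betw g (p ` A) (p ` A)"
proof -
  have "inj_on g (p ` A)"
  proof (rule inj_onI)
    fix X Y assume X: "X \<in> p ` A" and Y: "Y \<in> p ` A" and eq: "g X = g Y"
    from X obtain x where x: "x \<in> A" "X = p x" by blast
    from Y obtain y where y: "y \<in> A" "Y = p y" by blast
    have "p (h x) = p (h y)" using eq x y g by simp
    then have "p x = p y" by (rule reflect[OF x(1) y(1)])
    then show "X = Y" using x(2) y(2) by simp
  qed
  moreover have "g ` p ` A = p ` h ` A"
    unfolding image_image by (rule image_cong[OF refl g])
  ultimately show ?thesis using h unfolding bij_betw_def by simp
qed

locale central_subloop = loop_struct +
  fixes N :: "'a set"
  assumes unit_in_N: "e \<in> N"
    and central_N: "n \<in> N \<Longrightarrow> is_central Q m n"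
    and mult_closed_N: "n \<in> N \<Longrightarrow> k \<in> N \<Longrightarrow> m n k \<in> N"
    and ldiv_closed_N: "n \<in> N \<Longrightarrow> k \<in> N \<Longrightarrow> \<exists>j\<in>N. m n j = k"
begin

lemma N_subset: "N \<subseteq> Q"
  using central_N central_closed by blast

lemma lcoset_mult_N:
  assumes x: "x \<in> Q" and n: "n \<in> N"
  shows "lcoset m (m x n) N = lcoset m x N"
proof
  have nQ: "n \<in> Q" using n N_subset by blast
  show "lcoset m (m x n) N \<subseteq> lcoset m x N"
  proof
    fix y assume "y \<in> lcoset m (m x n) N"
    then obtain k where k: "k \<in> N" "y = m (m x n) k" unfolding lcoset_def by auto
    have "y = m x (m n k)" using central_assoc(3)[OF central_N[OF k(1)] x nQ] k(2) by simp
    then show "y \<in> lcoset m x N" unfolding lcoset_def using mult_closed_N[OF n k(1)] by blast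
  qed
  show "lcoset m x N \<subseteq> lcoset m (m x n) N"
  proof
    fix y assume "y \<in> lcoset m x N"
    then obtain k where k: "k \<in> N" "y = m x k" unfolding lcoset_def by auto
    obtain j where j: "j \<in> N" "m n j = k" using ldiv_closed_N n k(1) by blast
    have "y = m (m x n) j"
      using central_assoc(3)[OF central_N[OF j(1)] x nQ] j k by simp
    then show "y \<in> lcoset m (m x n) N" unfolding lcoset_def using j(1) by blast
  qed
qed

lemma lcoset_eq_iff:
  assumes "x \<in> Q" "y \<in> Q"
  shows "lcoset m x N = lcoset m y N \<longleftrightarrow> (\<exists>n\<in>N. y = m x n)"
proof
  assume "lcoset m x N = lcoset m y N"
  moreover have "y \<in> lcoset m y N" unfolding lcoset_def using unit_in_N right_unit assms by force
  ultimately show "\<exists>n\<in>N. y = m x n" unfolding lcoset_def by auto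
next
  assume "\<exists>n\<in>N. y = m x n"
  then obtain n where "n \<in> N" "y = m x n" by blast
  then show "lcoset m x N = lcoset m y N" using lcoset_mult_N[OF assms(1)] by simp
qed

lemma quot_mult_lcoset:
  assumes x: "x \<in> Q" and y: "y \<in> Q"
  shows "quot_mult Q m N (lcoset m x N) (lcoset m y N) = lcoset m (m x y) N"
proof -
  define a where "a = (SOME a. a \<in> Q \<and> lcoset m x N = lcoset m a N)"
  define b where "b = (SOME b. b \<in> Q \<and> lcoset m y N = lcoset m b N)"
  have a: "a \<in> Q \<and> lcoset m x N = lcoset m a N"
    unfolding a_def by (rule someI[of _ x]) (simp add: x)
  have b: "b \<in> Q \<and> lcoset m y N = lcoset m b N"
    unfolding b_def by (rule someI[of _ y]) (simp add: y)
  obtain n1 where n1: "n1 \<in> N" "a = m x n1"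
    using a unfolding lcoset_eq_iff[OF x conjunct1[OF a]] by blast
  obtain n2 where n2: "n2 \<in> N" "b = m y n2"
    using b unfolding lcoset_eq_iff[OF y conjunct1[OF b]] by blast
  have "quot_mult Q m N (lcoset m x N) (lcoset m y N) = lcoset m (m a b) N"
    unfolding quot_mult_def a_def b_def ..
  also have "m a b = m (m x y) (m n2 n1)"
    using mult_central_factors[OF x y central_N central_N] n1 n2 by simp
  also have "lcoset m \<dots> N = lcoset m (m x y) N"
    using lcoset_mult_N mult_closed x y mult_closed_N n1 n2 by simp
  finally show ?thesis .
qed

lemma quot_carrier_eq: "quot_carrier Q m N = (\<lambda>x. lcoset m x N) ` Q"
  unfolding quot_carrier_def by auto

lemma lcoset_unit: "lcoset m e N = N"
proof -
  have "m e ` N = (\<lambda>n. n) ` N" using left_unit N_subset by (intro image_cong) auto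
  then show ?thesis unfolding lcoset_def by simp
qed

lemma quot_bij_left:
  assumes x: "x \<in> Q"
  shows "bij_betw (quot_mult Q m N (lcoset m x N)) (quot_carrier Q m N) (quot_carrier Q m N)"
  unfolding quot_carrier_eq
proof (rule bij_betw_induced[OF bij_left[OF x]])
  fix y z assume yz: "y \<in> Q" "z \<in> Q" "lcoset m (m x y) N = lcoset m (m x z) N"
  then obtain n where n: "n \<in> N" "m x z = m (m x y) n"
    using yz(3) unfolding lcoset_eq_iff[OF mult_closed[OF x yz(1)] mult_closed[OF x yz(2)]] by blast
  then have "m x z = m x (m y n)"
    using central_assoc(3)[OF central_N[OF n(1)] x yz(1)] by simp
  then have "z = m y n"
    by (rule left_cancel[OF x yz(2) mult_closed[OF yz(1) central_closed[OF central_N[OF n(1)]]]])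
  then show "lcoset m y N = lcoset m z N" using lcoset_eq_iff[OF yz(1,2)] n(1) by blast
next
  fix y assume "y \<in> Q"
  then show "quot_mult Q m N (lcoset m x N) (lcoset m y N) = lcoset m (m x y) N"
    by (rule quot_mult_lcoset[OF x])
qed

lemma quot_bij_right:
  assumes x: "x \<in> Q"
  shows "bij_betw (\<lambda>Y. quot_mult Q m N Y (lcoset m x N)) (quot_carrier Q m N) (quot_carrier Q m N)"
  unfolding quot_carrier_eq
proof (rule bij_betw_induced[OF bij_right[OF x]])
  fix y z assume yz: "y \<in> Q" "z \<in> Q" "lcoset m (m y x) N = lcoset m (m z x) N"
  then obtain n where n: "n \<in> N" "m z x = m (m y x) n"
    using yz(3) unfolding lcoset_eq_iff[OF mult_closed[OF yz(1) x] mult_closed[OF yz(2) x]] by blast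
  then have "m z x = m (m y n) x"
    using central_swap[OF central_N[OF n(1)] yz(1) x] by simp
  then have "z = m y n"
    by (rule right_cancel[OF x yz(2) mult_closed[OF yz(1) central_closed[OF central_N[OF n(1)]]]])
  then show "lcoset m y N = lcoset m z N" using lcoset_eq_iff[OF yz(1,2)] n(1) by blast
next
  fix y assume "y \<in> Q"
  then show "quot_mult Q m N (lcoset m y N) (lcoset m x N) = lcoset m (m y x) N"
    by (rule quot_mult_lcoset[OF _ x])
qed

lemma loop_quot: "loop (quot_carrier Q m N) (quot_mult Q m N) N"
  unfolding loop_def
proof (intro conjI ballI)
  show "N \<in> quot_carrier Q m N"
    unfolding quot_carrier_eq using lcoset_unit unit_closed by (metis image_eqI)
next
  fix X Y assume "X \<in> quot_carrier Q m N" "Y \<in> quot_carrier Q m N"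
  then show "quot_mult Q m N X Y \<in> quot_carrier Q m N"
    unfolding quot_carrier_eq using quot_mult_lcoset mult_closed by auto
next
  fix X assume "X \<in> quot_carrier Q m N"
  then obtain x where x: "x \<in> Q" "X = lcoset m x N" unfolding quot_carrier_eq by auto
  show "quot_mult Q m N N X = X" "quot_mult Q m N X N = X"
    using quot_mult_lcoset[OF unit_closed x(1)] quot_mult_lcoset[OF x(1) unit_closed]
    by (simp_all add: lcoset_unit x left_unit right_unit)
  show "bij_betw (quot_mult Q m N X) (quot_carrier Q m N) (quot_carrier Q m N)"
    "bij_betw (\<lambda>Y. quot_mult Q m N Y X) (quot_carrier Q m N) (quot_carrier Q m N)"
    using quot_bij_left[OF x(1)] quot_bij_right[OF x(1)] x(2) by simp_all
qed

end

context loop_struct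
begin

lemma central_unit: "is_central Q m e"
  unfolding is_central_def using unit_closed left_unit right_unit mult_closed by simp

lemma central_subloop_center: "central_subloop Q m e {u. is_central Q m u}"
proof
  fix n k assume n: "n \<in> {u. is_central Q m u}" and k: "k \<in> {u. is_central Q m u}"
  show "m n k \<in> {u. is_central Q m u}" using central_mult n k by simp
  obtain j where "is_central Q m j" "m n j = k" using central_ldiv n k by auto
  then show "\<exists>j\<in>{u. is_central Q m u}. m n j = k" by blast
qed (simp_all add: central_unit)

lemma central_subloop_unit: "central_subloop Q m e {e}"
  by unfold_locales (simp_all add: central_unit left_unit unit_closed)

lemma upper_center_1: "upper_center Q m e (Suc 0) = {u. is_central Q m u}"
proof -
  interpret U: central_subloop Q m e "{e}" by (rule central_subloop_unit)
  interpret QU: loop_struct "quot_carrier Q m {e}" "quot_mult Q m {e}" "{e}"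
    by (rule loop_struct.intro, rule U.loop_quot)
  \<comment> \<open>\<open>Q/{e}\<close> is a copy of \<open>Q\<close> via \<open>x \<mapsto> {x}\<close>.\<close>
  have lcoset: "lcoset m x {e} = {x}" if "x \<in> Q" for x
    using that right_unit by (simp add: lcoset_def)
  have carrier: "quot_carrier Q m {e} = (\<lambda>x. {x}) ` Q"
    using U.quot_carrier_eq lcoset by simp
  have mult: "quot_mult Q m {e} {x} {y} = {m x y}" if "x \<in> Q" "y \<in> Q" for x y
    using U.quot_mult_lcoset[OF that] lcoset that mult_closed by simp
  have "is_central (quot_carrier Q m {e}) (quot_mult Q m {e}) {x}
      \<longleftrightarrow> is_central Q m x"
    if "x \<in> Q" for x
    unfolding is_central_def carrier using that by (auto simp: mult mult_closed)
  then show ?thesis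
    using QU.center_iff_central lcoset central_closed by auto
qed

lemma associator_unique:
  assumes "a \<in> Q" "b \<in> Q" "c \<in> Q" "n \<in> Q" and n: "m (m a b) c = m (m a (m b c)) n"
  shows "associator Q m a b c = n"
  unfolding associator_def ldiv_def
proof (rule the_equality)
  show "n \<in> Q \<and> m (m a (m b c)) n = m (m a b) c" using assms by simp
next
  fix z assume "z \<in> Q \<and> m (m a (m b c)) z = m (m a b) c"
  then show "z = n"
    using left_cancel[OF mult_closed[OF assms(1) mult_closed[OF assms(2,3)]] _ assms(4)] n by simp
qed

lemma associator_spec:
  assumes "a \<in> Q" "b \<in> Q" "c \<in> Q"
  shows "associator Q m a b c \<in> Q" "m (m a (m b c)) (associator Q m a b c) = m (m a b) c"
proof -
  obtain n where n: "n \<in> Q" "m (m a (m b c)) n = m (m a b) c"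
    using left_solvable[OF mult_closed[OF assms(1) mult_closed[OF assms(2,3)]]
        mult_closed[OF mult_closed[OF assms(1,2)] assms(3)]] by blast
  have "associator Q m a b c = n" using associator_unique[OF assms n(1) n(2)[symmetric]] .
  then show "associator Q m a b c \<in> Q" "m (m a (m b c)) (associator Q m a b c) = m (m a b) c"
    using n by simp_all
qed

lemma associator_central_of_upper_center_2:
  assumes Z2: "upper_center Q m e 2 = Q" and abc: "a \<in> Q" "b \<in> Q" "c \<in> Q"
  shows "is_central Q m (associator Q m a b c)"
proof -
  define Z where "Z = {u. is_central Q m u}"
  interpret Z: central_subloop Q m e Z unfolding Z_def by (rule central_subloop_center)
  interpret QZ: loop_struct "quot_carrier Q m Z" "quot_mult Q m Z" Z
    by (rule loop_struct.intro, rule Z.loop_quot)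
  have "upper_center Q m e 2
      = {x \<in> Q. lcoset m x Z \<in> center (quot_carrier Q m Z) (quot_mult Q m Z) Z}"
    unfolding numeral_2_eq_2 upper_center.simps(2)[of Q m e "Suc 0"] upper_center_1 Z_def
    by (rule refl)
  then have "{x \<in> Q. lcoset m x Z \<in> center (quot_carrier Q m Z) (quot_mult Q m Z) Z} = Q"
    using Z2 by simp
  then have "c \<in> {x \<in> Q. lcoset m x Z \<in> center (quot_carrier Q m Z) (quot_mult Q m Z) Z}"
    using abc(3) by simp
  then have "lcoset m c Z \<in> center (quot_carrier Q m Z) (quot_mult Q m Z) Z" by simp
  then have cZ: "is_central (quot_carrier Q m Z) (quot_mult Q m Z) (lcoset m c Z)"
    by (simp add: QZ.center_iff_central)
  have "quot_mult Q m Z (quot_mult Q m Z (lcoset m a Z) (lcoset m b Z)) (lcoset m c Z)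
      = quot_mult Q m Z (lcoset m a Z) (quot_mult Q m Z (lcoset m b Z) (lcoset m c Z))"
    by (rule QZ.central_assoc(3)[OF cZ]) (simp_all add: Z.quot_carrier_eq abc)
  then have "lcoset m (m a (m b c)) Z = lcoset m (m (m a b) c) Z"
    by (simp add: Z.quot_mult_lcoset mult_closed abc)
  then obtain n where n: "n \<in> Z" "m (m a b) c = m (m a (m b c)) n"
    unfolding Z.lcoset_eq_iff[OF mult_closed[OF abc(1) mult_closed[OF abc(2,3)]]
        mult_closed[OF mult_closed[OF abc(1,2)] abc(3)]] by blast
  then have "associator Q m a b c = n"
    using associator_unique[OF abc] Z.N_subset by blast
  then show ?thesis using n(1) unfolding Z_def by simp
qed

end

locale automorphic_central_associators = loop_struct +
  assumes inner_hom: "f \<in> inn Q m e \<Longrightarrow> x \<in> Q \<Longrightarrow> y \<in> Q \<Longrightarrow> f (m x y) = m (f x) (f y)"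
    and associator_central:
      "a \<in> Q \<Longrightarrow> b \<in> Q \<Longrightarrow> c \<in> Q \<Longrightarrow> is_central Q m (associator Q m a b c)"
begin

lemma inner_R_eq_associator:
  assumes "x \<in> Q" "c \<in> Q" "d \<in> Q"
  shows "inner_R Q m c d x = m x (associator Q m x c d)"
proof -
  have A: "is_central Q m (associator Q m x c d)" using associator_central assms by blast
  have "m (inner_R Q m c d x) (m c d) = m (m x (m c d)) (associator Q m x c d)"
    using inner_R_spec(2)[OF assms(2,3,1)] associator_spec(2)[OF assms] by simp
  also have "\<dots> = m (m x (associator Q m x c d)) (m c d)"
    using central_swap[OF A assms(1) mult_closed[OF assms(2,3)]] by simp
  finally show ?thesis
    using right_cancel[OF mult_closed[OF assms(2,3)] inner_R_spec(1)[OF assms(2,3,1)]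
        mult_closed[OF assms(1) central_closed[OF A]]] by blast
qed

lemma inner_L_mult_associator:
  assumes "a \<in> Q" "b \<in> Q" "x \<in> Q"
  shows "m (inner_L Q m a b x) (associator Q m a b x) = x"
proof -
  have A: "is_central Q m (associator Q m a b x)" using associator_central assms by blast
  have L: "inner_L Q m a b x \<in> Q" using inner_L_spec(1)[OF assms] .
  have "m (m a b) x = m (m (m a b) (inner_L Q m a b x)) (associator Q m a b x)"
    using inner_L_spec(2)[OF assms] associator_spec(2)[OF assms] by simp
  also have "\<dots> = m (m a b) (m (inner_L Q m a b x) (associator Q m a b x))"
    using central_assoc(3)[OF A mult_closed[OF assms(1,2)] L] .
  finally show ?thesis
    using left_cancel[OF mult_closed[OF assms(1,2)] assms(3)
        mult_closed[OF L central_closed[OF A]]] by simp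
qed

lemma associator_mult_left:
  assumes "a \<in> Q" "b \<in> Q" "c \<in> Q" "d \<in> Q"
  shows "associator Q m (m a b) c d = m (associator Q m a c d) (associator Q m b c d)"
proof -
  have ab: "m a b \<in> Q" using mult_closed assms by blast
  have A: "is_central Q m (associator Q m a c d)" "is_central Q m (associator Q m b c d)"
    "is_central Q m (associator Q m (m a b) c d)"
    using associator_central assms ab by blast+
  have "m (m a b) (associator Q m (m a b) c d) = inner_R Q m c d (m a b)"
    using inner_R_eq_associator[OF ab assms(3,4)] by simp
  also have "\<dots> = m (inner_R Q m c d a) (inner_R Q m c d b)"
    using inner_hom[OF inner_R_inn[OF assms(3,4)] assms(1,2)] .
  also have "\<dots> = m (m a b) (m (associator Q m b c d) (associator Q m a c d))"
    using inner_R_eq_associator assms mult_central_factors[OF assms(1,2) A(1,2)] by simp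
  finally have "associator Q m (m a b) c d = m (associator Q m b c d) (associator Q m a c d)"
    using left_cancel[OF ab central_closed[OF A(3)] mult_closed[OF central_closed[OF A(2)]
        central_closed[OF A(1)]]] by blast
  then show ?thesis using central_commute[OF A(2) central_closed[OF A(1)]] by simp
qed

lemma associator_mult_right:
  assumes "a \<in> Q" "b \<in> Q" "c \<in> Q" "d \<in> Q"
  shows "associator Q m a b (m c d) = m (associator Q m a b c) (associator Q m a b d)"
proof -
  have cd: "m c d \<in> Q" using mult_closed assms by blast
  have A: "is_central Q m (associator Q m a b c)" "is_central Q m (associator Q m a b d)"
    "is_central Q m (associator Q m a b (m c d))"
    using associator_central assms cd by blast+
  let ?L = "inner_L Q m a b"
  have L: "?L c \<in> Q" "?L d \<in> Q" "?L (m c d) \<in> Q" using inner_L_spec(1) assms cd by blast+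
  have "m (?L (m c d)) (associator Q m a b (m c d)) = m c d"
    using inner_L_mult_associator[OF assms(1,2) cd] .
  also have "\<dots> = m (m (?L c) (associator Q m a b c)) (m (?L d) (associator Q m a b d))"
    using inner_L_mult_associator assms by simp
  also have "\<dots> = m (m (?L c) (?L d)) (m (associator Q m a b d) (associator Q m a b c))"
    using mult_central_factors[OF L(1,2) A(1,2)] .
  also have "m (?L c) (?L d) = ?L (m c d)"
    using inner_hom[OF inner_L_inn[OF assms(1,2)] assms(3,4)] by simp
  finally have "associator Q m a b (m c d) = m (associator Q m a b d) (associator Q m a b c)"
    using left_cancel[OF L(3) central_closed[OF A(3)] mult_closed[OF central_closed[OF A(2)]
        central_closed[OF A(1)]]] by blast
  then show ?thesis using central_commute[OF A(2) central_closed[OF A(1)]] by simp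
qed

lemma associator_pentagon:
  assumes a: "a \<in> Q" and b: "b \<in> Q" and c: "c \<in> Q" and d: "d \<in> Q"
  shows "m (m (associator Q m b c d) (associator Q m a (m b c) d)) (associator Q m a b c)
       = m (associator Q m a b (m c d)) (associator Q m (m a b) c d)"
proof -
  define n1 where "n1 = associator Q m a b c"
  define n2 where "n2 = associator Q m a (m b c) d"
  define n3 where "n3 = associator Q m b c d"
  define n4 where "n4 = associator Q m (m a b) c d"
  define n5 where "n5 = associator Q m a b (m c d)"
  define P where "P = m a (m b (m c d))"
  have closed: "m a b \<in> Q" "m b c \<in> Q" "m c d \<in> Q" "m b (m c d) \<in> Q" "m a (m b c) \<in> Q"
    "P \<in> Q"
    using a b c d mult_closed unfolding P_def by blast+
  have central: "is_central Q m n1" "is_central Q m n2" "is_central Q m n3"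
    "is_central Q m n4" "is_central Q m n5"
    unfolding n1_def n2_def n3_def n4_def n5_def using associator_central a b c d closed by blast+
  have inQ: "n1 \<in> Q" "n2 \<in> Q" "n3 \<in> Q" "n4 \<in> Q" "n5 \<in> Q"
    using central central_closed by blast+
  have "m (m (m a b) c) d = m (m (m a (m b c)) n1) d"
    using associator_spec(2)[OF a b c] unfolding n1_def by simp
  also have "\<dots> = m (m (m a (m b c)) d) n1" using central_swap[OF central(1) closed(5) d] .
  also have "m (m a (m b c)) d = m (m a (m (m b c) d)) n2"
    using associator_spec(2)[OF a closed(2) d] unfolding n2_def by simp
  also have "m (m b c) d = m (m b (m c d)) n3"
    using associator_spec(2)[OF b c d] unfolding n3_def by simp
  also have "m a (m (m b (m c d)) n3) = m P n3"
    unfolding P_def using central_assoc(3)[OF central(3) a closed(4)] by simp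
  also have "m (m (m P n3) n2) n1 = m P (m (m n3 n2) n1)"
    using central_assoc(3)[OF central(2) closed(6) inQ(3)]
      central_assoc(3)[OF central(1) closed(6) mult_closed[OF inQ(3,2)]] by simp
  finally have left_bracketing: "m (m (m a b) c) d = m P (m (m n3 n2) n1)" .
  have "m (m (m a b) c) d = m (m (m a b) (m c d)) n4"
    using associator_spec(2)[OF closed(1) c d] unfolding n4_def by simp
  also have "m (m a b) (m c d) = m P n5"
    using associator_spec(2)[OF a b closed(3)] unfolding n5_def P_def by simp
  also have "m (m P n5) n4 = m P (m n5 n4)" using central_assoc(3)[OF central(4) closed(6) inQ(5)] .
  finally have "m P (m (m n3 n2) n1) = m P (m n5 n4)" using left_bracketing by simp
  then show ?thesis
    unfolding n1_def[symmetric] n2_def[symmetric] n3_def[symmetric] n4_def[symmetric]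
      n5_def[symmetric]
    by (rule left_cancel[OF closed(6) mult_closed[OF mult_closed[OF inQ(3,2)] inQ(1)]
          mult_closed[OF inQ(5,4)]])
qed

lemma associator_mult_middle:
  assumes a: "a \<in> Q" and b: "b \<in> Q" and c: "c \<in> Q" and d: "d \<in> Q"
  shows "associator Q m a (m b c) d = m (associator Q m a b d) (associator Q m a c d)"
proof -
  define n1 where "n1 = associator Q m a b c"
  define n2 where "n2 = associator Q m a (m b c) d"
  define n3 where "n3 = associator Q m b c d"
  define x where "x = associator Q m a b d"
  define y where "y = associator Q m a c d"
  have central: "is_central Q m n1" "is_central Q m n2" "is_central Q m n3"
    "is_central Q m x" "is_central Q m y"
    unfolding n1_def n2_def n3_def x_def y_def using associator_central a b c d mult_closed by blast+
  have inQ: "n1 \<in> Q" "n2 \<in> Q" "n3 \<in> Q" "x \<in> Q" "y \<in> Q"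
    using central central_closed by blast+
  have "m (m n1 n3) n2 = m (m n3 n2) n1"
    using central_commute central_assoc(3) central inQ mult_closed by metis
  also have "\<dots> = m (m n1 x) (m y n3)"
    using associator_pentagon[OF a b c d] associator_mult_left[OF a b c d]
      associator_mult_right[OF a b c d]
    unfolding n1_def n2_def n3_def x_def y_def by simp
  also have "\<dots> = m (m n1 n3) (m x y)"
    using mult_central_factors[OF inQ(1,3) central(4,5)] central_commute[OF central(3) inQ(5)]
      central_commute[OF central(5) inQ(4)] by simp
  finally have "m (m n1 n3) n2 = m (m n1 n3) (m x y)" .
  then show ?thesis unfolding n2_def[symmetric] x_def[symmetric] y_def[symmetric]
    by (rule left_cancel[OF mult_closed[OF inQ(1,3)] inQ(2) mult_closed[OF inQ(4,5)]])
qed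

end

theorem proposition2p3:
  fixes Q :: "'a set" and m :: "'a \<Rightarrow> 'a \<Rightarrow> 'a" and e :: 'a
  assumes "loop Q m e"
    and "automorphic Q m e"
    and "nilpotency_class Q m e 2"
  shows "\<forall>a\<in>Q. \<forall>b\<in>Q. \<forall>c\<in>Q. \<forall>d\<in>Q.
           associator Q m (m a b) c d = m (associator Q m a c d) (associator Q m b c d)
         \<and> associator Q m a (m b c) d = m (associator Q m a b d) (associator Q m a c d)
         \<and> associator Q m a b (m c d) = m (associator Q m a b c) (associator Q m a b d)"
proof -
  interpret loop_struct Q m e by (rule loop_struct.intro) (fact assms(1))
  have "upper_center Q m e 2 = Q" using assms(3) unfolding nilpotency_class_def by simp
  interpret automorphic_central_associators Q m e
  proof
    show "f (m x y) = m (f x) (f y)" if "f \<in> inn Q m e" "x \<in> Q" "y \<in> Q" for f x y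
      using assms(2) that unfolding automorphic_def by blast
    show "is_central Q m (associator Q m a b c)" if "a \<in> Q" "b \<in> Q" "c \<in> Q" for a b c
      using associator_central_of_upper_center_2 \<open>upper_center Q m e 2 = Q\<close> that by blast
  qed
  show ?thesis
    by (simp add: associator_mult_left associator_mult_middle associator_mult_right)
qed

end
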